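(* Let $G$ be a bipartite graph with bipartition $(X,Y)$, $|X| = n\geq 2$, $|Y|=m$, every $x\in X$ having degree at least $\delta$, and let $(C,x)$ be a tight pair in $G$. If $2 \leq |N(x)\cap V(C)| < |Y\cap V(C)|$ and $n \leq \delta$, then $m \geq 3\delta - 4$.
   Context: A tight pair in $G$ is a pair $(C,x)$ where $C$ is a longest cycle in $G$ and $x \in X \setminus V(C)$, chosen such that $|N(x)\cap V(C)|$ is maximum over all pairs $(C',x')$ with $C'$ a longest cycle in $G$ and $x' \in X\setminus V(C')$. *)

theory Defs
  imports Main
begin

definition bipartite_graph :: "'a set \<Rightarrow> 'a set \<Rightarrow> ('a \<Rightarrow> 'a \<Rightarrow> bool) \<Rightarrow> bool" where
  "bipartite_graph X Y E \<longleftrightarrow> finite X \<and> finite Y \<and> X \<inter> Y = {} \<and>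
     (\<forall>u v. E u v \<longrightarrow> E v u) \<and>
     (\<forall>u v. E u v \<longrightarrow> (u \<in> X \<and> v \<in> Y) \<or> (u \<in> Y \<and> v \<in> X))"

definition nbhd :: "('a \<Rightarrow> 'a \<Rightarrow> bool) \<Rightarrow> 'a \<Rightarrow> 'a set" where
  "nbhd E v = {u. E v u}"

text \<open>A cycle is given by the cyclic list of its (distinct) vertices, of length at least 3;
  consecutive vertices (cyclically) are adjacent. V(C) = set C, length of C = length C.\<close>
definition is_cycle :: "'a set \<Rightarrow> ('a \<Rightarrow> 'a \<Rightarrow> bool) \<Rightarrow> 'a list \<Rightarrow> bool" where
  "is_cycle V E C \<longleftrightarrow> length C \<ge> 3 \<and> distinct C \<and> set C \<subseteq> V \<and>
     (\<forall>i < length C. E (C ! i) (C ! ((i + 1) mod length C)))"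

definition longest_cycle :: "'a set \<Rightarrow> ('a \<Rightarrow> 'a \<Rightarrow> bool) \<Rightarrow> 'a list \<Rightarrow> bool" where
  "longest_cycle V E C \<longleftrightarrow> is_cycle V E C \<and>
     (\<forall>C'. is_cycle V E C' \<longrightarrow> length C' \<le> length C)"

definition tight_pair :: "'a set \<Rightarrow> 'a set \<Rightarrow> ('a \<Rightarrow> 'a \<Rightarrow> bool) \<Rightarrow> 'a list \<Rightarrow> 'a \<Rightarrow> bool" where
  "tight_pair X Y E C x \<longleftrightarrow> longest_cycle (X \<union> Y) E C \<and> x \<in> X - set C \<and>
     (\<forall>C' x'. longest_cycle (X \<union> Y) E C' \<and> x' \<in> X - set C' \<longrightarrow>
        card (nbhd E x' \<inter> set C') \<le> card (nbhd E x \<inter> set C))"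

end

theory Submission
  imports Defs
begin

(* Index C periodically from a neighbour of x, so that its Y-vertices sit at the even
   positions; C has 2k vertices, x has d neighbours on it, and n <= delta forces k < delta.
   Let a_1, ..., a_d be the successors on C of the neighbours of x. Since C is longest, the
   off-cycle neighbourhoods of x, a_1, ..., a_d are pairwise disjoint subsets of Y - V(C);
   since the pair is tight, every vertex of C that can be exchanged for x in a longest cycle
   has at most d neighbours on C. Counting Y therefore gives
     m >= k + (delta - d) + d (delta - k) + M,
   where M is the number of non-adjacent pairs (a_i, y) with y in Y on C. Exchange arguments
   along the arcs between consecutive neighbours of x bound M from below (by k - d, and by
   k - 2 when d >= 3) unless a "free crossing" exists, whose off-cycle neighbourhood supplies
   another delta - d vertices of Y. In every case the count reaches 3 delta - 4. *)

lemma successively_upt: "(\<And>i. P i (Suc i)) \<Longrightarrow> successively P [a..<b]"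
  by (auto simp: successively_conv_nth)

lemma is_cycleI:
  assumes "3 \<le> length xs" "distinct xs" "set xs \<subseteq> V" "successively E xs" "E (last xs) (hd xs)"
  shows "is_cycle V E xs"
  unfolding is_cycle_def
proof (intro conjI allI impI)
  fix i assume i: "i < length xs"
  show "E (xs ! i) (xs ! ((i + 1) mod length xs))"
  proof (cases "Suc i < length xs")
    case True then show ?thesis using successively_nth[OF assms(4) True] by simp
  next
    case False
    then have "i = length xs - 1" using i by simp
    moreover have "xs \<noteq> []" using assms(1) by auto
    ultimately show ?thesis using assms(5) i by (simp add: last_conv_nth hd_conv_nth)
  qed
qed (use assms in auto)

lemma is_cycle_rotate:
  assumes "is_cycle V E C"
  shows "is_cycle V E (rotate m C)"
  unfolding is_cycle_def
proof (intro conjI allI impI)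
  let ?L = "length C"
  have L3: "3 \<le> ?L" and edge: "\<And>i. i < ?L \<Longrightarrow> E (C ! i) (C ! ((i + 1) mod ?L))"
    using assms unfolding is_cycle_def by auto
  then have L_pos: "0 < ?L" by linarith
  fix i assume "i < length (rotate m C)"
  then have "rotate m C ! i = C ! ((m + i) mod ?L)"
    and "rotate m C ! ((i + 1) mod length (rotate m C)) = C ! (((m + i) mod ?L + 1) mod ?L)"
    using L_pos by (simp_all add: nth_rotate mod_add_right_eq mod_Suc_eq)
  then show "E (rotate m C ! i) (rotate m C ! ((i + 1) mod length (rotate m C)))"
    using edge[of "(m + i) mod ?L"] L_pos by simp
qed (use assms in \<open>auto simp: is_cycle_def\<close>)

lemma tight_pair_rotate:
  assumes "tight_pair X Y E C x" "y \<in> set C"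
  obtains C' where "tight_pair X Y E C' x" "set C' = set C" "C' ! 0 = y"
proof -
  obtain i where i: "i < length C" "C ! i = y" using assms(2) by (metis in_set_conv_nth)
  have "is_cycle (X \<union> Y) E (rotate i C)"
    using assms(1) is_cycle_rotate unfolding tight_pair_def longest_cycle_def by blast
  then have "tight_pair X Y E (rotate i C) x"
    using assms(1) unfolding tight_pair_def longest_cycle_def by simp
  moreover have "rotate i C ! 0 = y" using i by (subst nth_rotate) auto
  ultimately show thesis using that by simp
qed

lemma card_add_card_le_of_separated:
  fixes A B S :: "nat set"
  assumes "finite S" "A \<subseteq> S" "B \<subseteq> S" "\<And>p q. p \<in> A \<Longrightarrow> q \<in> B \<Longrightarrow> q \<le> p"
  shows "card A + card B \<le> card S + 1"
proof -
  have fin: "finite A" "finite B" using assms(1-3) by (auto intro: finite_subset)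
  have "card (A \<inter> B) \<le> 1"
    using assms(4) fin by (auto simp: card_le_Suc0_iff_eq intro: le_antisym)
  moreover have "card (A \<union> B) \<le> card S" using assms by (intro card_mono) auto
  moreover have "card (A \<union> B) + card (A \<inter> B) = card A + card B" using fin by (rule card_Un_Int[symmetric])
  ultimately show ?thesis by linarith
qed

lemma add_le_mult_add_2:
  fixes h d e :: nat
  assumes "2 \<le> h" "d \<le> h + e" "1 \<le> e"
  shows "d + e \<le> h * e + 2"
proof (cases "d \<le> e + 2")
  case True
  have "2 * e \<le> h * e" using assms(1) by simp
  then show ?thesis using True by linarith
next
  case False
  have "0 \<le> (int e - 1) * (int d - int e - 2)" using False assms(3) by simp
  then have "int (d + e) \<le> int ((d - e) * e + 2)" using False by (simp add: of_nat_diff algebra_simps)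
  moreover have "(d - e) * e \<le> h * e" using assms(2) by (intro mult_right_mono) simp_all
  ultimately show ?thesis by linarith
qed

locale rooted_tight_pair =
  fixes X Y :: "'a set" and E :: "'a \<Rightarrow> 'a \<Rightarrow> bool" and C :: "'a list" and x :: 'a
  assumes bipartite: "bipartite_graph X Y E"
    and tight: "tight_pair X Y E C x"
    and root: "E x (C ! 0)"
begin

definition L where "L = length C"
definition cyc where "cyc i = C ! (i mod L)"
definition d where "d = card (nbhd E x \<inter> set C)"
definition k where "k = L div 2"

lemma edge_sym: "E u v \<Longrightarrow> E v u"
  using bipartite unfolding bipartite_graph_def by blast

lemma disjoint_XY: "X \<inter> Y = {}"
  using bipartite unfolding bipartite_graph_def by blast

lemma finite_X: "finite X" and finite_Y: "finite Y"
  using bipartite unfolding bipartite_graph_def by auto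

lemma edge_in_V: "E u v \<Longrightarrow> u \<in> X \<union> Y"
  using bipartite unfolding bipartite_graph_def by blast

lemma edge_X_Y: "E u v \<Longrightarrow> u \<in> X \<Longrightarrow> v \<in> Y"
  using bipartite disjoint_XY unfolding bipartite_graph_def by blast

lemma edge_Y_X: "E u v \<Longrightarrow> u \<in> Y \<Longrightarrow> v \<in> X"
  using bipartite disjoint_XY unfolding bipartite_graph_def by blast

lemma nbhd_subset_Y: "v \<in> X \<Longrightarrow> nbhd E v \<subseteq> Y"
  unfolding nbhd_def using edge_X_Y by blast

lemma finite_nbhd: "finite (nbhd E v)"
proof -
  have "nbhd E v \<subseteq> X \<union> Y" unfolding nbhd_def using edge_in_V edge_sym by blast
  then show ?thesis using finite_X finite_Y finite_subset by blast
qed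

lemma x_in_X: "x \<in> X" and x_notin_C: "x \<notin> set C"
  using tight unfolding tight_pair_def by auto

lemma tight_bound:
  "longest_cycle (X \<union> Y) E C' \<Longrightarrow> x' \<in> X - set C' \<Longrightarrow> card (nbhd E x' \<inter> set C') \<le> d"
  using tight unfolding tight_pair_def d_def by blast

lemma C_is_cycle: "is_cycle (X \<union> Y) E C"
  using tight unfolding tight_pair_def longest_cycle_def by blast

lemma length_le_L: "is_cycle (X \<union> Y) E C' \<Longrightarrow> length C' \<le> L"
  using tight unfolding tight_pair_def longest_cycle_def L_def by blast

lemma L_ge_3: "3 \<le> L" and distinct_C: "distinct C" and set_C_subset: "set C \<subseteq> X \<union> Y"
  using C_is_cycle unfolding is_cycle_def L_def by auto

lemma L_pos: "0 < L"
  using L_ge_3 by simp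

lemma card_set_C: "card (set C) = L"
  using distinct_C L_def by (simp add: distinct_card)

lemma cyc_edge: "E (cyc i) (cyc (Suc i))"
proof -
  have "i mod L < L" using L_ge_3 by simp
  then have "E (C ! (i mod L)) (C ! ((i mod L + 1) mod L))"
    using C_is_cycle unfolding is_cycle_def L_def by blast
  then show ?thesis unfolding cyc_def by (simp add: mod_Suc_eq)
qed

lemma cyc_add_L: "cyc (i + L) = cyc i" and cyc_L_add: "cyc (L + i) = cyc i"
  unfolding cyc_def by simp_all

lemma cyc_L: "cyc L = cyc 0"
  using cyc_L_add[of 0] by simp

lemma cyc_in_C: "cyc i \<in> set C"
proof -
  have "i mod L < length C" using L_pos L_def by simp
  then show ?thesis unfolding cyc_def by simp
qed

lemma cyc_in_V: "cyc i \<in> X \<union> Y"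
  using cyc_in_C set_C_subset by blast

lemma cyc_inj_on: "inj_on cyc {s..<s + L}"
proof -
  have "i = j" if "i \<in> {s..<s + L}" "j \<in> {s..<s + L}" "cyc i = cyc j" "i \<le> j" for i j
  proof -
    have "i mod L = j mod L"
      using that(3) distinct_C L_pos unfolding cyc_def L_def by (subst (asm) nth_eq_iff_index_eq) auto
    then have "L dvd j - i" using mod_eq_dvd_iff_nat[OF \<open>i \<le> j\<close>, of L] by auto
    moreover have "j - i < L" using that(1,2) by auto
    ultimately have "j - i = 0" by (metis dvd_imp_le neq0_conv not_le)
    then show "i = j" using \<open>i \<le> j\<close> by simp
  qed
  then show ?thesis unfolding inj_on_def by (metis nat_le_linear)
qed

lemma cyc_image: "cyc ` {s..<s + L} = set C"
proof -
  have "card (cyc ` {s..<s + L}) = card (set C)"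
    using cyc_inj_on card_set_C by (simp add: card_image)
  moreover have "cyc ` {s..<s + L} \<subseteq> set C" using cyc_in_C by blast
  ultimately show ?thesis by (simp add: card_subset_eq)
qed

lemma cyc_Y_iff_even: "cyc i \<in> Y \<longleftrightarrow> even i"
  and cyc_X_iff_odd: "cyc i \<in> X \<longleftrightarrow> odd i"
proof (induction i)
  case 0
  have "cyc 0 \<in> Y" using root x_in_X edge_X_Y unfolding cyc_def by simp
  then show "cyc 0 \<in> Y \<longleftrightarrow> even 0" "cyc 0 \<in> X \<longleftrightarrow> odd 0" using disjoint_XY by auto
next
  case (Suc i)
  have "cyc (Suc i) \<in> Y \<longleftrightarrow> cyc i \<in> X"
    using cyc_edge[of i] cyc_in_V[of i] cyc_in_V[of "Suc i"] edge_X_Y edge_Y_X disjoint_XY by blast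
  then show "cyc (Suc i) \<in> Y \<longleftrightarrow> even (Suc i)" "cyc (Suc i) \<in> X \<longleftrightarrow> odd (Suc i)"
    using Suc.IH cyc_in_V[of "Suc i"] disjoint_XY by auto
qed

lemma even_L: "even L"
  using cyc_Y_iff_even[of L] cyc_Y_iff_even[of 0] cyc_L by simp

lemma nbr_x_even: "E x (cyc i) \<Longrightarrow> even i"
  using edge_X_Y x_in_X cyc_Y_iff_even by blast

definition seg where "seg i j = map cyc [i..<j]"

lemma seg_successively: "successively E (seg i j)"
  unfolding seg_def successively_map by (rule successively_upt) (rule cyc_edge)

lemma seg_successively_converse: "successively (\<lambda>u v. E v u) (seg i j)"
  unfolding seg_def successively_map by (rule successively_upt) (rule edge_sym, rule cyc_edge)

lemma seg_rev_successively: "successively E (rev (seg i j))"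
  using seg_successively_converse by (simp add: successively_rev)

lemma length_seg [simp]: "length (seg i j) = j - i"
  and set_seg [simp]: "set (seg i j) = cyc ` {i..<j}"
  and seg_eq_Nil_iff [simp]: "seg i j = [] \<longleftrightarrow> j \<le> i"
  unfolding seg_def by auto

lemma hd_seg [simp]: "i < j \<Longrightarrow> hd (seg i j) = cyc i"
  unfolding seg_def by (simp add: upt_conv_Cons)

lemma last_seg [simp]: "i < j \<Longrightarrow> last (seg i j) = cyc (j - 1)"
  unfolding seg_def by (simp add: last_map)

lemma set_seg_subset_V: "set (seg i j) \<subseteq> X \<union> Y"
  using cyc_in_V by auto

lemmas seg_simps = seg_successively seg_successively_converse seg_rev_successively
  successively_append_iff successively_Cons hd_rev last_rev hd_append last_append

lemma longer_cycle_impossible: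
  assumes "successively E D" "D \<noteq> []" "E (last D) (hd D)" "set D \<subseteq> X \<union> Y"
    "length D = L + 2" "set C \<subseteq> set D" "x \<in> set D" "z \<in> set D" "z \<notin> set C" "z \<noteq> x"
  shows False
proof -
  have "insert x (insert z (set C)) \<subseteq> set D" using assms by blast
  moreover have "card (insert x (insert z (set C))) = L + 2"
    using assms(9,10) x_notin_C card_set_C by simp
  ultimately have "L + 2 \<le> card (set D)" by (metis card_mono List.finite_set)
  then have "distinct D" using card_length[of D] assms(5) by (intro card_distinct) simp
  then have "is_cycle (X \<union> Y) E D" using assms L_ge_3 by (intro is_cycleI) auto
  then show False using length_le_L assms(5) by fastforce
qed

lemma exchange_degree_bound:
  assumes "successively E D" "D \<noteq> []" "E (last D) (hd D)"
    "set D = insert x (set C - {t})" "length D = L" "t \<in> set C" "t \<in> X"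
  shows "card (nbhd E t \<inter> set C) \<le> d"
proof -
  have "card (insert x (set C - {t})) = L"
    using assms(6) x_notin_C card_set_C L_ge_3 by (simp add: card_Diff_singleton)
  then have "distinct D" using assms(4,5) by (intro card_distinct) simp
  moreover have "set D \<subseteq> X \<union> Y" unfolding assms(4) using set_C_subset x_in_X by blast
  ultimately have "is_cycle (X \<union> Y) E D" using assms L_ge_3 by (intro is_cycleI) auto
  then have "longest_cycle (X \<union> Y) E D" unfolding longest_cycle_def using length_le_L assms(5) by simp
  moreover have "t \<in> X - set D" using assms(4,6,7) x_notin_C by auto
  ultimately have "card (nbhd E t \<inter> set D) \<le> d" by (rule tight_bound)
  moreover have "nbhd E t \<inter> set D = nbhd E t \<inter> set C"
    using assms(4,7) nbhd_subset_Y x_in_X disjoint_XY by auto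
  ultimately show ?thesis by simp
qed

lemma no_common_off_cycle_nbr_x_succ:
  assumes "E x (cyc i)" "E z x" "E z (cyc (Suc i))" "z \<notin> set C"
  shows False
proof (rule longer_cycle_impossible)
  define D where "D = [x, z] @ seg (Suc i) (i + L + 1)"
  have ne: "Suc i < i + L + 1" using L_ge_3 by simp
  show "successively E D" using ne assms edge_sym by (simp add: D_def seg_simps)
  show "E (last D) (hd D)" using ne assms edge_sym by (simp add: D_def cyc_add_L[of i])
  show "set D \<subseteq> X \<union> Y" using x_in_X edge_in_V[OF assms(2)] set_seg_subset_V by (auto simp: D_def)
  show "length D = L + 2" by (simp add: D_def)
  show "set C \<subseteq> set D" using cyc_image[of "Suc i"] by (auto simp: D_def)
  show "x \<in> set D" "z \<in> set D" "D \<noteq> []" by (auto simp: D_def)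
  show "z \<noteq> x" using assms(2) edge_X_Y[OF edge_sym x_in_X] disjoint_XY x_in_X by blast
qed (fact assms)

lemma no_common_off_cycle_nbr_succs:
  assumes "E x (cyc i)" "E x (cyc j)" "i < j" "j < i + L"
    "E z (cyc (Suc i))" "E z (cyc (Suc j))" "z \<notin> set C" "z \<noteq> x"
  shows False
proof (rule longer_cycle_impossible)
  define D where "D = [x] @ rev (seg (Suc j) (i + L + 1)) @ [z] @ seg (Suc i) (Suc j)"
  show "successively E D" using assms edge_sym by (simp add: D_def seg_simps cyc_add_L[of i])
  show "E (last D) (hd D)" using assms edge_sym by (simp add: D_def)
  show "set D \<subseteq> X \<union> Y" using x_in_X edge_in_V[OF assms(5)] set_seg_subset_V by (auto simp: D_def)
  show "length D = L + 2" using assms by (simp add: D_def)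
  have "set C = cyc ` {Suc i..<Suc i + L}" using cyc_image[of "Suc i"] by simp
  also have "\<dots> \<subseteq> cyc ` ({Suc j..<i + L + 1} \<union> {Suc i..<Suc j})"
    by (rule image_mono) (use assms in auto)
  finally show "set C \<subseteq> set D" by (auto simp: D_def image_Un)
  show "x \<in> set D" "z \<in> set D" "D \<noteq> []" by (auto simp: D_def)
qed (use assms in auto)

lemma short_arc_degree_bound:
  assumes "E x (cyc i)" "E x (cyc (i + 2))"
  shows "card (nbhd E (cyc (Suc i)) \<inter> set C) \<le> d"
proof (rule exchange_degree_bound)
  define D where "D = [x] @ seg (i + 2) (i + L + 1)"
  show "successively E D" using assms edge_sym L_ge_3 by (simp add: D_def seg_simps)
  show "E (last D) (hd D)" using assms edge_sym L_ge_3 by (simp add: D_def cyc_add_L[of i])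
  show "length D = L" using L_ge_3 by (simp add: D_def)
  have "set C - {cyc (Suc i)} = cyc ` {Suc i..<Suc i + L} - cyc ` {Suc i}"
    using cyc_image[of "Suc i"] by simp
  also have "\<dots> = cyc ` ({Suc i..<Suc i + L} - {Suc i})"
    using L_ge_3 by (intro inj_on_image_set_diff[OF cyc_inj_on, symmetric]) auto
  also have "{Suc i..<Suc i + L} - {Suc i} = {i + 2..<i + L + 1}" by auto
  finally show "set D = insert x (set C - {cyc (Suc i)})" by (auto simp: D_def)
  show "cyc (Suc i) \<in> X" using nbr_x_even[OF assms(1)] cyc_X_iff_odd by simp
  show "D \<noteq> []" "cyc (Suc i) \<in> set C" by (auto simp: D_def cyc_in_C)
qed

(* For witnesses p < q, the closed walk
   x c_q c_(q-1) ... c_(p+1) c_(t-1) c_(t-2) ... c_(q+1) c_(t+1) c_(t+2) ... c_(p+L) x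
   (c = cyc) is a longest cycle through x that avoids c_t. *)
definition crossing where
  "crossing t \<longleftrightarrow> (\<exists>p q. p < L \<and> E x (cyc p) \<and> E x (cyc q) \<and> p + 2 \<le> q \<and> q + 3 \<le> t \<and>
     t + 1 \<le> p + L \<and> E (cyc (Suc p)) (cyc (t - 1)) \<and> E (cyc (Suc q)) (cyc (Suc t)))"

lemma crossingE:
  assumes "crossing t"
  obtains p q where "p < L" "E x (cyc p)" "E x (cyc q)" "p + 2 \<le> q" "q + 3 \<le> t" "t + 1 \<le> p + L"
    "E (cyc (Suc p)) (cyc (t - 1))" "E (cyc (Suc q)) (cyc (Suc t))"
  using assms unfolding crossing_def by blast

lemma crossing_in_X: "crossing t \<Longrightarrow> cyc t \<in> X"
proof (elim crossingE)
  fix q assume "E x (cyc q)" "E (cyc (Suc q)) (cyc (Suc t))"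
  then have "cyc (Suc t) \<in> Y" using nbr_x_even edge_X_Y cyc_X_iff_odd by simp
  then show "cyc t \<in> X" using cyc_Y_iff_even cyc_X_iff_odd by simp
qed

lemma crossing_degree_bound:
  assumes "crossing t"
  shows "card (nbhd E (cyc t) \<inter> set C) \<le> d"
  using assms
proof (elim crossingE)
  fix p q assume pq: "E x (cyc p)" "E x (cyc q)" "p + 2 \<le> q" "q + 3 \<le> t" "t + 1 \<le> p + L"
    "E (cyc (Suc p)) (cyc (t - 1))" "E (cyc (Suc q)) (cyc (Suc t))"
  define D where "D = [x] @ rev (seg (Suc p) (Suc q)) @ rev (seg (Suc q) t) @ seg (Suc t) (p + L + 1)"
  show ?thesis
  proof (rule exchange_degree_bound)
    show "successively E D" using pq edge_sym by (simp add: D_def seg_simps)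
    show "E (last D) (hd D)" using pq edge_sym by (simp add: D_def cyc_add_L[of p])
    show "length D = L" using pq by (simp add: D_def)
    have "set C - {cyc t} = cyc ` {Suc p..<Suc p + L} - cyc ` {t}" using cyc_image[of "Suc p"] by simp
    also have "\<dots> = cyc ` ({Suc p..<Suc p + L} - {t})"
      using pq by (intro inj_on_image_set_diff[OF cyc_inj_on, symmetric]) auto
    also have "{Suc p..<Suc p + L} - {t} = {Suc p..<Suc q} \<union> {Suc q..<t} \<union> {Suc t..<p + L + 1}"
      using pq by auto
    finally show "set D = insert x (set C - {cyc t})" by (auto simp: D_def image_Un)
    show "cyc t \<in> X" using crossing_in_X[OF assms] .
    show "D \<noteq> []" "cyc t \<in> set C" by (auto simp: D_def cyc_in_C)
  qed
qed

lemma crossing_off_cycle_nbr_not_x_nbr: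
  assumes "crossing t" "z \<in> nbhd E (cyc t) - set C"
  shows "\<not> E x z"
proof
  assume xz: "E x z"
  from assms(1) obtain p q where pq: "E x (cyc q)" "q + 3 \<le> t" "t + 1 \<le> q + L"
    "E (cyc (Suc q)) (cyc (Suc t))" by (elim crossingE) auto
  have zt: "E z (cyc t)" and zC: "z \<notin> set C" using assms(2) edge_sym unfolding nbhd_def by auto
  show False
  proof (rule longer_cycle_impossible)
    define D where "D = [x, z, cyc t] @ rev (seg (Suc q) t) @ seg (Suc t) (q + L + 1)"
    show "successively E D" using pq xz zt edge_sym cyc_edge[of "t - 1"] by (simp add: D_def seg_simps)
    show "E (last D) (hd D)" using pq edge_sym by (simp add: D_def cyc_add_L[of q])
    show "set D \<subseteq> X \<union> Y" using x_in_X edge_in_V[OF zt] set_seg_subset_V cyc_in_V by (auto simp: D_def)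
    show "length D = L + 2" using pq by (simp add: D_def)
    have "set C = cyc ` {Suc q..<Suc q + L}" using cyc_image[of "Suc q"] by simp
    also have "\<dots> \<subseteq> cyc ` ({t} \<union> {Suc q..<t} \<union> {Suc t..<q + L + 1})"
      by (rule image_mono) (use pq in auto)
    finally show "set C \<subseteq> set D" by (auto simp: D_def image_Un)
    show "x \<in> set D" "z \<in> set D" "D \<noteq> []" by (auto simp: D_def)
    show "z \<noteq> x" using xz edge_X_Y[OF xz x_in_X] disjoint_XY x_in_X by blast
  qed (fact zC)
qed

lemma common_nbr_left_of_crossing_impossible:
  assumes "E x (cyc p)" "E x (cyc l)" "p + 2 \<le> l" "l + 2 \<le> t" "t + 1 \<le> p + L"
    "E (cyc (Suc p)) (cyc (t - 1))" "E z (cyc t)" "E z (cyc (Suc l))" "z \<notin> set C" "z \<noteq> x"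
  shows False
proof (rule longer_cycle_impossible)
  define D where
    "D = [x] @ rev (seg (Suc t) (p + L + 1)) @ [cyc t, z] @ seg (Suc l) t @ seg (Suc p) (Suc l)"
  show "successively E D"
    using assms edge_sym cyc_edge[of t] by (simp add: D_def seg_simps cyc_add_L[of p])
  show "E (last D) (hd D)" using assms edge_sym by (simp add: D_def)
  show "set D \<subseteq> X \<union> Y" using x_in_X edge_in_V[OF assms(7)] set_seg_subset_V cyc_in_V by (auto simp: D_def)
  show "length D = L + 2" using assms by (simp add: D_def)
  have "set C = cyc ` {Suc p..<Suc p + L}" using cyc_image[of "Suc p"] by simp
  also have "\<dots> \<subseteq> cyc ` ({Suc t..<p + L + 1} \<union> {t} \<union> {Suc l..<t} \<union> {Suc p..<Suc l})"
    by (rule image_mono) (use assms in auto)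
  finally show "set C \<subseteq> set D" by (auto simp: D_def image_Un)
  show "x \<in> set D" "z \<in> set D" "D \<noteq> []" by (auto simp: D_def)
qed (use assms in auto)

lemma common_nbr_right_of_crossing_impossible:
  assumes "E x (cyc q)" "E x (cyc l)" "q + 3 \<le> t" "t + 1 \<le> l" "l + 2 \<le> q + L"
    "E (cyc (Suc q)) (cyc (Suc t))" "E z (cyc t)" "E z (cyc (Suc l))" "z \<notin> set C" "z \<noteq> x"
  shows False
proof (rule longer_cycle_impossible)
  define D where
    "D = [x] @ rev (seg (Suc t) (Suc l)) @ seg (Suc q) (Suc t) @ [z] @ seg (Suc l) (q + L + 1)"
  show "successively E D" using assms edge_sym by (simp add: D_def seg_simps)
  show "E (last D) (hd D)" using assms edge_sym by (simp add: D_def cyc_add_L[of q])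
  show "set D \<subseteq> X \<union> Y" using x_in_X edge_in_V[OF assms(7)] set_seg_subset_V cyc_in_V by (auto simp: D_def)
  show "length D = L + 2" using assms by (simp add: D_def)
  have "set C = cyc ` {Suc q..<Suc q + L}" using cyc_image[of "Suc q"] by simp
  also have "\<dots> \<subseteq> cyc ` ({Suc t..<Suc l} \<union> {Suc q..<Suc t} \<union> {Suc l..<q + L + 1})"
    by (rule image_mono) (use assms in auto)
  finally show "set C \<subseteq> set D" by (auto simp: D_def image_Un)
  show "x \<in> set D" "z \<in> set D" "D \<noteq> []" by (auto simp: D_def)
qed (use assms in auto)

(* At a free crossing t, the off-cycle neighbours of c_t (at least delta - d of them)
   are vertices of Y not yet counted. *)
definition free_crossing where "free_crossing t \<longleftrightarrow> crossing t \<and> \<not> E x (cyc (t - 1))"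

lemma free_crossing_off_cycle_nbr_not_succ_nbr:
  assumes "free_crossing t" "E x (cyc l)" "l < L" "z \<in> nbhd E (cyc t) - set C"
  shows "\<not> E (cyc (Suc l)) z"
proof
  assume lz: "E (cyc (Suc l)) z"
  have t_gap: "\<not> E x (cyc (t - 1))" using assms(1) unfolding free_crossing_def by blast
  from assms(1) obtain p q where pq: "p < L" "E x (cyc p)" "E x (cyc q)" "p + 2 \<le> q" "q + 3 \<le> t"
    "t + 1 \<le> p + L" "E (cyc (Suc p)) (cyc (t - 1))" "E (cyc (Suc q)) (cyc (Suc t))"
    unfolding free_crossing_def by (blast elim: crossingE)
  have zt: "E z (cyc t)" and zC: "z \<notin> set C" using assms(4) edge_sym unfolding nbhd_def by auto
  have zx: "z \<noteq> x" using zt edge_X_Y[OF edge_sym crossing_in_X] assms(1) disjoint_XY x_in_X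
    unfolding free_crossing_def by blast
  define l' where "l' = (if p < l then l else l + L)"
  have l'x: "E x (cyc l')" and l'z: "E z (cyc (Suc l'))"
    using assms(2) lz edge_sym cyc_add_L[of l] cyc_add_L[of "Suc l"] unfolding l'_def by auto
  have "p < l'" "l' \<le> p + L" using assms(3) pq(1) unfolding l'_def by auto
  moreover have "even l'" "even p" "odd t"
    using l'x pq(2) nbr_x_even crossing_in_X assms(1) cyc_X_iff_odd
    unfolding free_crossing_def by blast+
  moreover have "l' \<noteq> t - 1" using l'x t_gap by auto
  ultimately have "p + 2 \<le> l'" "l' + 2 \<le> q + L" and side: "l' + 2 \<le> t \<or> t + 1 \<le> l'"
    using pq(4) by presburger+
  from side show False
  proof
    assume "l' + 2 \<le> t"
    then show False
      using common_nbr_left_of_crossing_impossible[OF pq(2) l'x \<open>p + 2 \<le> l'\<close> _ pq(6,7) zt l'z zC zx]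
      by blast
  next
    assume "t + 1 \<le> l'"
    then show False
      using common_nbr_right_of_crossing_impossible[OF pq(3) l'x pq(5) _ \<open>l' + 2 \<le> q + L\<close> pq(8)
        zt l'z zC zx]
      by blast
  qed
qed

definition xpos where "xpos = {i. i < L \<and> E x (cyc i)}"
definition Ypos where "Ypos = {u. 0 < u \<and> u \<le> L \<and> even u}"
definition miss where "miss i = card {u \<in> Ypos. \<not> E (cyc (Suc i)) (cyc u)}"

lemma finite_xpos: "finite xpos"
  unfolding xpos_def by simp

lemma xpos_less_L: "i \<in> xpos \<Longrightarrow> i < L"
  and xpos_nbr: "i \<in> xpos \<Longrightarrow> E x (cyc i)"
  unfolding xpos_def by simp_all

lemma zero_in_xpos: "0 \<in> xpos"
  unfolding xpos_def cyc_def using root L_pos by simp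

lemma xpos_even: "i \<in> xpos \<Longrightarrow> even i"
  using xpos_nbr nbr_x_even by blast

lemma xpos_add_2_le: "i \<in> xpos \<Longrightarrow> j \<in> xpos \<Longrightarrow> i < j \<Longrightarrow> i + 2 \<le> j"
  using xpos_even[of i] xpos_even[of j] by presburger

lemma xpos_add_2_le_L: "i \<in> xpos \<Longrightarrow> i + 2 \<le> L"
  using xpos_less_L[of i] xpos_even[of i] even_L by presburger

lemma succ_in_X: "even i \<Longrightarrow> cyc (Suc i) \<in> X"
  using cyc_X_iff_odd by simp

lemma card_xpos: "card xpos = d"
proof -
  have "nbhd E x \<inter> set C = cyc ` xpos"
  proof
    show "cyc ` xpos \<subseteq> nbhd E x \<inter> set C" unfolding xpos_def nbhd_def using cyc_in_C by auto
    show "nbhd E x \<inter> set C \<subseteq> cyc ` xpos"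
    proof
      fix v assume v: "v \<in> nbhd E x \<inter> set C"
      then obtain i where "i \<in> {0..<0 + L}" "v = cyc i" using cyc_image[of 0] by blast
      then show "v \<in> cyc ` xpos" using v unfolding xpos_def nbhd_def by auto
    qed
  qed
  moreover have "inj_on cyc xpos" using cyc_inj_on[of 0] by (rule inj_on_subset) (auto simp: xpos_def)
  ultimately show ?thesis unfolding d_def by (simp add: card_image)
qed

lemma finite_Ypos: "finite Ypos"
  unfolding Ypos_def by simp

lemma card_Ypos: "card Ypos = k"
proof -
  have "Ypos = (\<lambda>j. 2 * j + 2) ` {0..<L div 2}"
  proof (intro equalityI subsetI)
    fix u assume "u \<in> Ypos"
    then have "0 < u" "u \<le> L" "even u" unfolding Ypos_def by auto
    then have "u = 2 * ((u - 2) div 2) + 2" "(u - 2) div 2 < L div 2"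
      using even_L by presburger+
    then show "u \<in> (\<lambda>j. 2 * j + 2) ` {0..<L div 2}" by auto
  qed (use even_L in \<open>auto simp: Ypos_def\<close>)
  moreover have "inj_on (\<lambda>j::nat. 2 * j + 2) {0..<L div 2}" by (auto simp: inj_on_def)
  ultimately show ?thesis unfolding k_def by (simp add: card_image)
qed

lemma inj_on_cyc_Ypos: "inj_on cyc Ypos"
  using cyc_inj_on[of 1] by (rule inj_on_subset) (auto simp: Ypos_def)

lemma Y_inter_C_eq: "Y \<inter> set C = cyc ` Ypos"
proof
  show "cyc ` Ypos \<subseteq> Y \<inter> set C" unfolding Ypos_def using cyc_in_C cyc_Y_iff_even by auto
  show "Y \<inter> set C \<subseteq> cyc ` Ypos"
  proof
    fix v assume v: "v \<in> Y \<inter> set C"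
    then obtain i where "i \<in> {1..<1 + L}" "v = cyc i" using cyc_image[of 1] by blast
    then show "v \<in> cyc ` Ypos" using v cyc_Y_iff_even unfolding Ypos_def by auto
  qed
qed

lemma card_Y_inter_C: "card (Y \<inter> set C) = k"
  unfolding Y_inter_C_eq card_Ypos[symmetric] using inj_on_cyc_Ypos by (rule card_image)

lemma card_X_inter_C: "card (X \<inter> set C) = k"
proof -
  have "set C = (X \<inter> set C) \<union> (Y \<inter> set C)" using set_C_subset by blast
  moreover have "(X \<inter> set C) \<inter> (Y \<inter> set C) = {}" using disjoint_XY by blast
  ultimately have "card (set C) = card (X \<inter> set C) + card (Y \<inter> set C)"
    by (metis card_Un_disjoint List.finite_set finite_Int)
  then show ?thesis using card_set_C card_Y_inter_C even_L k_def by auto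
qed

lemma k_less_card_X: "k < card X"
proof -
  have "insert x (X \<inter> set C) \<subseteq> X" using x_in_X by blast
  then have "card (insert x (X \<inter> set C)) \<le> card X" using finite_X by (rule card_mono[rotated])
  then show ?thesis using card_X_inter_C x_notin_C by simp
qed

lemma card_succ_nbhd_inter_C:
  assumes "even i"
  shows "card (nbhd E (cyc (Suc i)) \<inter> set C) = k - miss i"
proof -
  let ?N = "{u \<in> Ypos. E (cyc (Suc i)) (cyc u)}"
  have "nbhd E (cyc (Suc i)) \<inter> set C = nbhd E (cyc (Suc i)) \<inter> (Y \<inter> set C)"
    using nbhd_subset_Y[OF succ_in_X[OF assms]] by blast
  also have "\<dots> = cyc ` ?N" unfolding Y_inter_C_eq nbhd_def by auto
  finally have "card (nbhd E (cyc (Suc i)) \<inter> set C) = card ?N"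
    using inj_on_cyc_Ypos by (simp add: card_image inj_on_subset)
  moreover have "card ?N + miss i = k"
  proof -
    have "Ypos = ?N \<union> {u \<in> Ypos. \<not> E (cyc (Suc i)) (cyc u)}" by auto
    then have "card Ypos = card ?N + miss i"
      unfolding miss_def using finite_Ypos by (subst card_Un_disjoint[symmetric]) auto
    then show ?thesis using card_Ypos by simp
  qed
  ultimately show ?thesis by simp
qed

lemma miss_le_k: "miss i \<le> k"
  unfolding miss_def card_Ypos[symmetric] using finite_Ypos by (intro card_mono) auto

(* For the last position of xpos, next_pos returns L, which again denotes the
   neighbour cyc L = cyc 0 of x. *)
definition next_pos where
  "next_pos i = (if \<exists>j\<in>xpos. i < j then Min {j \<in> xpos. i < j} else L)"

lemma next_pos_cases:
  assumes "i \<in> xpos"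
  obtains "next_pos i \<in> xpos" "i < next_pos i" "\<And>j. j \<in> xpos \<Longrightarrow> i < j \<Longrightarrow> next_pos i \<le> j"
    | "next_pos i = L" "\<And>j. j \<in> xpos \<Longrightarrow> j \<le> i"
proof (cases "\<exists>j\<in>xpos. i < j")
  case True
  let ?S = "{j \<in> xpos. i < j}"
  have "finite ?S" "?S \<noteq> {}" using finite_xpos True by auto
  then have "Min ?S \<in> ?S" "\<And>j. j \<in> ?S \<Longrightarrow> Min ?S \<le> j" using Min_in[of ?S] by auto
  then show thesis using that(1) True unfolding next_pos_def by auto
next
  case False
  then have "next_pos i = L" "\<And>j. j \<in> xpos \<Longrightarrow> j \<le> i" unfolding next_pos_def by auto
  then show thesis by (rule that(2))
qed

lemma next_pos_gt: "i \<in> xpos \<Longrightarrow> i < next_pos i"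
  using xpos_less_L by (metis next_pos_cases)

lemma next_pos_le_L: "i \<in> xpos \<Longrightarrow> next_pos i \<le> L"
  using xpos_less_L by (metis less_imp_le_nat next_pos_cases order_refl)

lemma next_pos_in_xpos: "i \<in> xpos \<Longrightarrow> next_pos i < L \<Longrightarrow> next_pos i \<in> xpos"
  by (metis less_irrefl next_pos_cases)

lemma next_pos_le: "i \<in> xpos \<Longrightarrow> j \<in> xpos \<Longrightarrow> i < j \<Longrightarrow> next_pos i \<le> j"
  by (metis leD next_pos_cases)

lemma next_pos_eq_L: "i \<in> xpos \<Longrightarrow> next_pos i = L \<Longrightarrow> j \<in> xpos \<Longrightarrow> j \<le> i"
  by (metis next_pos_cases order_less_irrefl xpos_less_L)

lemma not_in_xpos_before_next_pos: "i \<in> xpos \<Longrightarrow> i < j \<Longrightarrow> j < next_pos i \<Longrightarrow> j \<notin> xpos"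
  using next_pos_le leD by blast

lemma not_nbr_before_next_pos: "i \<in> xpos \<Longrightarrow> i < j \<Longrightarrow> j < next_pos i \<Longrightarrow> \<not> E x (cyc j)"
  using not_in_xpos_before_next_pos next_pos_le_L unfolding xpos_def by fastforce

lemma nbr_next_pos: "i \<in> xpos \<Longrightarrow> E x (cyc (next_pos i))"
  using xpos_nbr zero_in_xpos cyc_L by (metis next_pos_cases)

definition arc where "arc i = {u. i < u \<and> u \<le> next_pos i \<and> even u}"
definition arc_len where "arc_len i = (next_pos i - i) div 2"

lemma next_pos_eq:
  assumes "i \<in> xpos"
  shows "next_pos i = i + 2 * arc_len i"
  using next_pos_gt[OF assms] nbr_x_even[OF nbr_next_pos[OF assms]] xpos_even[OF assms]
  unfolding arc_len_def by (auto elim!: evenE)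

lemma arc_len_ge_1: "i \<in> xpos \<Longrightarrow> 1 \<le> arc_len i"
  using next_pos_gt[of i] next_pos_eq[of i] by simp

lemma card_arc: "i \<in> xpos \<Longrightarrow> card (arc i) = arc_len i"
proof -
  assume i: "i \<in> xpos"
  have "arc i = (\<lambda>j. i + 2 * j + 2) ` {0..<arc_len i}"
  proof (intro equalityI subsetI)
    fix u assume "u \<in> arc i"
    then have "i < u" "u \<le> i + 2 * arc_len i" "even u" using next_pos_eq[OF i] unfolding arc_def by auto
    then have "u = i + 2 * ((u - i - 2) div 2) + 2" "(u - i - 2) div 2 < arc_len i"
      using xpos_even[OF i] by presburger+
    then show "u \<in> (\<lambda>j. i + 2 * j + 2) ` {0..<arc_len i}" by auto
  qed (use next_pos_eq[OF i] xpos_even[OF i] in \<open>auto simp: arc_def\<close>)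
  moreover have "inj_on (\<lambda>j. i + 2 * j + 2) {0..<arc_len i}" by (auto simp: inj_on_def)
  ultimately show ?thesis by (simp add: card_image)
qed

lemma arc_subset_Ypos: "i \<in> xpos \<Longrightarrow> arc i \<subseteq> Ypos"
  unfolding arc_def Ypos_def using next_pos_le_L by fastforce

lemma arc_disjoint: "i \<in> xpos \<Longrightarrow> j \<in> xpos \<Longrightarrow> i \<noteq> j \<Longrightarrow> arc i \<inter> arc j = {}"
proof -
  have *: "arc i \<inter> arc j = {}" if "i \<in> xpos" "j \<in> xpos" "i < j" for i j
    using next_pos_le[OF that] unfolding arc_def by auto
  show "i \<in> xpos \<Longrightarrow> j \<in> xpos \<Longrightarrow> i \<noteq> j \<Longrightarrow> arc i \<inter> arc j = {}"
    using *[of i j] *[of j i] by (cases "i < j") auto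
qed

lemma Ypos_eq_UN_arc: "Ypos = (\<Union>i\<in>xpos. arc i)"
proof
  show "(\<Union>i\<in>xpos. arc i) \<subseteq> Ypos" using arc_subset_Ypos by blast
  show "Ypos \<subseteq> (\<Union>i\<in>xpos. arc i)"
  proof
    fix u assume u: "u \<in> Ypos"
    let ?S = "{j \<in> xpos. j < u}"
    have "finite ?S" "?S \<noteq> {}" using finite_xpos zero_in_xpos u unfolding Ypos_def by auto
    define i where "i = Max ?S"
    have i: "i \<in> xpos" "i < u" and i_max: "\<And>j. j \<in> xpos \<Longrightarrow> j < u \<Longrightarrow> j \<le> i"
      using Max_in[OF \<open>finite ?S\<close> \<open>?S \<noteq> {}\<close>] Max_ge[OF \<open>finite ?S\<close>] unfolding i_def by auto
    have "u \<le> next_pos i"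
    proof (rule ccontr)
      assume "\<not> u \<le> next_pos i"
      then have "next_pos i \<in> xpos" using next_pos_in_xpos[OF i(1)] u unfolding Ypos_def by simp
      then show False using i_max \<open>\<not> u \<le> next_pos i\<close> next_pos_gt[OF i(1)] by force
    qed
    then have "u \<in> arc i" using i u unfolding arc_def Ypos_def by simp
    then show "u \<in> (\<Union>i\<in>xpos. arc i)" using i by blast
  qed
qed

lemma sum_arc_len: "(\<Sum>i\<in>xpos. arc_len i) = k"
proof -
  have "k = card (\<Union>i\<in>xpos. arc i)" using card_Ypos Ypos_eq_UN_arc by simp
  also have "\<dots> = (\<Sum>i\<in>xpos. card (arc i))"
    using finite_xpos arc_subset_Ypos finite_Ypos arc_disjoint
    by (intro card_UN_disjoint) (auto intro: finite_subset)
  finally show ?thesis using card_arc by simp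
qed

lemma sum_arc_len_minus_1: "(\<Sum>i\<in>xpos. arc_len i - 1) = k - d"
proof -
  have "(\<Sum>i\<in>xpos. arc_len i - 1) + (\<Sum>i\<in>xpos. 1) = (\<Sum>i\<in>xpos. arc_len i)"
    unfolding sum.distrib[symmetric] using arc_len_ge_1 by (intro sum.cong) (auto simp: Suc_le_eq)
  then show ?thesis using sum_arc_len card_xpos by simp
qed

(* By the minimum degree, every miss (j, u) forces one more neighbour of c_(j+1) off C. *)
definition misses where
  "misses = {(j, u). j \<in> xpos \<and> u \<in> Ypos \<and> \<not> E (cyc (Suc j)) (cyc u)}"
definition misses_on_arc where "misses_on_arc i = {m \<in> misses. snd m \<in> arc i}"

lemma finite_misses: "finite misses"
proof -
  have "misses \<subseteq> xpos \<times> Ypos" unfolding misses_def by auto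
  then show ?thesis using finite_xpos finite_Ypos finite_subset by blast
qed

lemma card_misses_eq_sum_miss: "card misses = (\<Sum>j\<in>xpos. miss j)"
proof -
  have "misses = Sigma xpos (\<lambda>j. {u \<in> Ypos. \<not> E (cyc (Suc j)) (cyc u)})" unfolding misses_def by auto
  then show ?thesis unfolding miss_def using finite_xpos finite_Ypos by (simp add: card_SigmaI)
qed

lemma card_misses_eq_sum_arcs: "card misses = (\<Sum>i\<in>xpos. card (misses_on_arc i))"
proof -
  have "misses = (\<Union>i\<in>xpos. misses_on_arc i)"
    using Ypos_eq_UN_arc unfolding misses_on_arc_def misses_def by auto
  moreover have "card (\<Union>i\<in>xpos. misses_on_arc i) = (\<Sum>i\<in>xpos. card (misses_on_arc i))"
    using finite_xpos finite_misses arc_disjoint unfolding misses_on_arc_def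
    by (intro card_UN_disjoint) auto
  ultimately show ?thesis by simp
qed

lemma miss_le_card_misses: "j \<in> xpos \<Longrightarrow> miss j \<le> card misses"
  unfolding card_misses_eq_sum_miss using finite_xpos by (intro member_le_sum) auto

lemma mem_misses_on_arc:
  "i \<in> xpos \<Longrightarrow> j \<in> xpos \<Longrightarrow> i < u \<Longrightarrow> u \<le> next_pos i \<Longrightarrow> even u \<Longrightarrow> \<not> E (cyc (Suc j)) (cyc u)
    \<Longrightarrow> (j, u) \<in> misses_on_arc i"
  unfolding misses_on_arc_def misses_def arc_def Ypos_def using next_pos_le_L[of i] by auto

lemma xpos_avoiding_two: "3 \<le> d \<Longrightarrow> \<exists>r\<in>xpos. r \<noteq> u \<and> r \<noteq> v"
proof (rule ccontr)
  assume "3 \<le> d" "\<not> (\<exists>r\<in>xpos. r \<noteq> u \<and> r \<noteq> v)"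
  then have "card xpos \<le> card {u, v}" by (intro card_mono) auto
  also have "\<dots> \<le> 2" by (simp add: card_insert_le_m1)
  finally show False using \<open>3 \<le> d\<close> card_xpos by simp
qed

lemma free_crossing_in_arc:
  assumes i: "i \<in> xpos" and r: "r \<in> xpos" "r \<noteq> i" and j: "i + 3 \<le> j" "Suc j \<le> next_pos i"
    and "E (cyc (Suc i)) (cyc (Suc j))" "E (cyc (Suc r)) (cyc (j - 1))"
  shows "free_crossing j \<or> free_crossing (j + L)"
proof -
  have gap: "\<not> E x (cyc (j - 1))" using not_nbr_before_next_pos[OF i, of "j - 1"] j by simp
  show ?thesis
  proof (cases "r < i")
    case True
    then have "crossing j" unfolding crossing_def
      using assms xpos_less_L xpos_nbr xpos_add_2_le next_pos_le_L[OF i] by (intro exI[of _ r] exI[of _ i]) auto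
    then show ?thesis using gap unfolding free_crossing_def by blast
  next
    case False
    then have "next_pos i \<le> r" using next_pos_le i r by simp
    have shift: "cyc (j + L - 1) = cyc (j - 1)" using j cyc_add_L[of "j - 1"] by (simp add: add.commute)
    have "crossing (j + L)" unfolding crossing_def
    proof (intro exI conjI)
      show "r < L" "E x (cyc r)" using r xpos_less_L xpos_nbr by auto
      show "E x (cyc (i + L))" using xpos_nbr[OF i] cyc_add_L[of i] by simp
      show "r + 2 \<le> i + L" using xpos_add_2_le_L[OF r(1)] by simp
      show "i + L + 3 \<le> j + L" "j + L + 1 \<le> r + L" using j \<open>next_pos i \<le> r\<close> by simp_all
      show "E (cyc (Suc r)) (cyc (j + L - 1))" using assms(7) shift by simp
      show "E (cyc (Suc (i + L))) (cyc (Suc (j + L)))"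
        using assms(6) cyc_add_L[of "Suc i"] cyc_add_L[of "Suc j"] by simp
    qed
    then show ?thesis using gap shift unfolding free_crossing_def by auto
  qed
qed

(* Each odd position j = i + 2s + 1 strictly inside arc i yields a miss: either c_(i+1) misses
   c_(j+1), or otherwise, absent free crossings, c_(r+1) misses c_(j-1). *)
definition arc_witness where
  "arc_witness r i s = (let j = i + 2 * s + 1 in
     if E (cyc (Suc i)) (cyc (Suc j)) then (r, j - 1) else (i, Suc j))"

lemma arc_witness_mem:
  assumes i: "i \<in> xpos" and r: "r \<in> xpos" "r \<noteq> i" and no_free: "\<nexists>t. free_crossing t"
    and s: "1 \<le> s" "s < arc_len i"
  shows "arc_witness r i s \<in> misses_on_arc i"
proof -
  define j where "j = i + 2 * s + 1"
  have j: "i + 3 \<le> j" "Suc j \<le> next_pos i" using next_pos_eq[OF i] s unfolding j_def by simp_all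
  have "even (Suc j)" "even (j - 1)" using xpos_even[OF i] unfolding j_def by auto
  show ?thesis
  proof (cases "E (cyc (Suc i)) (cyc (Suc j))")
    case True
    then have "\<not> E (cyc (Suc r)) (cyc (j - 1))" using free_crossing_in_arc[OF i r j] no_free by blast
    then have "(r, j - 1) \<in> misses_on_arc i"
      using mem_misses_on_arc[OF i r(1)] j \<open>even (j - 1)\<close> by simp
    then show ?thesis using True unfolding arc_witness_def j_def Let_def by simp
  next
    case False
    then have "(i, Suc j) \<in> misses_on_arc i" using mem_misses_on_arc[OF i i] j \<open>even (Suc j)\<close> by simp
    then show ?thesis using False unfolding arc_witness_def j_def Let_def by simp
  qed
qed

lemma arc_witness_inj: "r \<noteq> i \<Longrightarrow> inj_on (arc_witness r i) {1..<arc_len i}"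
  unfolding inj_on_def arc_witness_def Let_def by (auto split: if_splits)

lemma card_misses_on_arc_ge:
  assumes i: "i \<in> xpos" and "2 \<le> d" "\<nexists>t. free_crossing t"
  shows "arc_len i - 1 \<le> card (misses_on_arc i)"
proof -
  obtain r where r: "r \<in> xpos" "r \<noteq> i"
  proof -
    have "xpos \<noteq> {i}" using assms(2) card_xpos by auto
    then show thesis using that i by blast
  qed
  have "arc_witness r i ` {1..<arc_len i} \<subseteq> misses_on_arc i"
    using arc_witness_mem[OF i r assms(3)] by auto
  then have "card (arc_witness r i ` {1..<arc_len i}) \<le> card (misses_on_arc i)"
    using finite_misses unfolding misses_on_arc_def by (intro card_mono) auto
  then show ?thesis using arc_witness_inj[OF r(2)] by (simp add: card_image)
qed

lemma next_pos_mod_in_xpos: "i \<in> xpos \<Longrightarrow> next_pos i mod L \<in> xpos"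
  using next_pos_in_xpos[of i] next_pos_le_L[of i] zero_in_xpos by (cases "next_pos i < L") auto

lemma next_pos_mod_ne: "i \<in> xpos \<Longrightarrow> 2 \<le> d \<Longrightarrow> next_pos i mod L \<noteq> i"
proof
  assume i: "i \<in> xpos" and "2 \<le> d" and eq: "next_pos i mod L = i"
  have "\<not> next_pos i < L" using eq next_pos_gt[OF i] by auto
  then have "next_pos i = L" using next_pos_le_L[OF i] by simp
  with eq have "i = 0" by simp
  then have "xpos \<subseteq> {0}" using next_pos_eq_L[OF i \<open>next_pos i = L\<close>] by auto
  then have "card xpos \<le> 1" using card_mono[of "{0::nat}" xpos] by simp
  then show False using \<open>2 \<le> d\<close> card_xpos by simp
qed

lemma cyc_next_pos_mod: "cyc (next_pos i mod L) = cyc (next_pos i)"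
  unfolding cyc_def by simp

lemma shifted_xpos_add_4_le:
  assumes i: "i \<in> xpos" "2 \<le> arc_len i" and q: "q \<in> xpos" "q \<noteq> i" "q \<noteq> next_pos i mod L"
  shows "(if next_pos i mod L < q then q else q + L) + 4 \<le> next_pos i mod L + L"
proof (cases "next_pos i < L")
  case True
  then have b: "next_pos i mod L = next_pos i" by simp
  have n: "i + 4 \<le> next_pos i" using next_pos_eq[OF i(1)] i(2) by simp
  have "next_pos i < q \<or> q + 2 \<le> i"
  proof (cases "q < i")
    case True
    then show ?thesis using xpos_add_2_le[OF q(1) i(1)] by simp
  next
    case False
    then have "next_pos i \<le> q" using next_pos_le[OF i(1) q(1)] q(2) by simp
    then show ?thesis using q(3) b by simp
  qed
  then show ?thesis using xpos_add_2_le_L[OF q(1)] n b by auto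
next
  case False
  then have "next_pos i = L" using next_pos_le_L[OF i(1)] by simp
  then show ?thesis
    using next_pos_eq_L[OF i(1) _ q(1)] xpos_add_2_le[OF q(1) i(1)] q next_pos_eq[OF i(1)] i(2) by auto
qed

lemma free_crossing_at_arc_end:
  assumes i: "i \<in> xpos" and "2 \<le> arc_len i" and q: "q \<in> xpos" "q \<noteq> i" "q \<noteq> next_pos i mod L"
    and b_edge: "E (cyc (Suc (next_pos i mod L))) (cyc (next_pos i - 2))"
    and q_edge: "E (cyc (Suc q)) (cyc (next_pos i))"
  shows "free_crossing (next_pos i mod L + L - 1)"
proof -
  define b where "b = next_pos i mod L"
  define q' where "q' = (if b < q then q else q + L)"
  have b: "b \<in> xpos" using next_pos_mod_in_xpos[OF i] unfolding b_def .
  have n: "i + 4 \<le> next_pos i" using next_pos_eq[OF i] assms(2) by simp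
  have before_end: "cyc (b + L - 1 - 1) = cyc (next_pos i - 2)"
  proof (cases "next_pos i < L")
    case True
    then have "b + L - 1 - 1 = (next_pos i - 2) + L" using n unfolding b_def by simp
    then show ?thesis by (simp add: cyc_add_L)
  next
    case False
    then show ?thesis using next_pos_le_L[OF i] unfolding b_def by (simp add: numeral_2_eq_2)
  qed
  have at_end: "cyc (Suc (b + L - 1)) = cyc (next_pos i)"
    using L_pos cyc_add_L[of b] cyc_next_pos_mod unfolding b_def by simp
  have "q' + 3 \<le> b + L - 1" using shifted_xpos_add_4_le[OF i assms(2) q] unfolding q'_def b_def by simp
  moreover have "E x (cyc q')" using xpos_nbr[OF q(1)] cyc_add_L[of q] unfolding q'_def by simp
  moreover have "E (cyc (Suc q')) (cyc (Suc (b + L - 1)))"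
    using q_edge at_end cyc_add_L[of "Suc q"] unfolding q'_def by simp
  moreover have "b + 2 \<le> q'"
    using xpos_add_2_le[OF b q(1)] xpos_add_2_le_L[OF b] q(3) unfolding q'_def b_def by auto
  ultimately have "crossing (b + L - 1)" unfolding crossing_def
    using b xpos_less_L xpos_nbr b_edge before_end L_pos unfolding b_def
    by (intro exI[of _ b] exI[of _ q']) (auto simp: b_def)
  moreover have "\<not> E x (cyc (b + L - 1 - 1))"
    using before_end not_nbr_before_next_pos[OF i, of "next_pos i - 2"] n by simp
  ultimately show ?thesis unfolding free_crossing_def b_def by simp
qed

lemma miss_off_row_on_arc:
  assumes i: "i \<in> xpos" and "3 \<le> d" "\<nexists>t. free_crossing t" "2 \<le> arc_len i"
    and i_miss: "\<not> E (cyc (Suc i)) (cyc (next_pos i))"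
  obtains j u where "(j, u) \<in> misses_on_arc i" "j \<noteq> i"
proof -
  let ?b = "next_pos i mod L"
  have b: "?b \<in> xpos" "?b \<noteq> i" using next_pos_mod_in_xpos[OF i] next_pos_mod_ne[OF i] assms(2) by auto
  have n: "i < next_pos i - 2" "even (next_pos i - 2)"
    using next_pos_eq[OF i] assms(4) xpos_even[OF i] by auto
  consider (b_misses) "\<not> E (cyc (Suc ?b)) (cyc (next_pos i - 2))"
    | (other_misses) r where "r \<in> xpos" "r \<noteq> i" "r \<noteq> ?b" "\<not> E (cyc (Suc r)) (cyc (next_pos i))"
    | (crossing) q where "q \<in> xpos" "q \<noteq> ?b" "E (cyc (Suc q)) (cyc (next_pos i))"
        "E (cyc (Suc ?b)) (cyc (next_pos i - 2))"
    using xpos_avoiding_two[OF assms(2), of i ?b] by blast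
  then show thesis
  proof cases
    case b_misses
    then show thesis using that[of ?b] mem_misses_on_arc[OF i b(1) n(1) _ n(2)] b(2) by simp
  next
    case other_misses
    then show thesis
      using that[of r "next_pos i"]
        mem_misses_on_arc[OF i _ next_pos_gt[OF i] _ nbr_x_even[OF nbr_next_pos[OF i]]]
      by simp
  next
    case crossing
    then have "q \<noteq> i" using i_miss by blast
    then have "free_crossing (?b + L - 1)" using free_crossing_at_arc_end[OF i assms(4)] crossing by blast
    then show thesis using assms(3) by blast
  qed
qed

lemma card_misses_on_arc_ge_arc_len:
  assumes i: "i \<in> xpos" and "3 \<le> d" and no_free: "\<nexists>t. free_crossing t" and "2 \<le> arc_len i"
  shows "arc_len i \<le> card (misses_on_arc i)"
proof -
  obtain r where r: "r \<in> xpos" "r \<noteq> i" using xpos_avoiding_two[OF assms(2), of i i] by blast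
  let ?W = "arc_witness r i ` {1..<arc_len i}"
  have W_sub: "?W \<subseteq> misses_on_arc i" using arc_witness_mem[OF i r no_free] by auto
  have card_W: "card ?W = arc_len i - 1" using arc_witness_inj[OF r(2)] by (simp add: card_image)
  obtain e where e: "e \<in> misses_on_arc i" "e \<notin> ?W"
  proof (cases "\<exists>s\<in>{1..<arc_len i}. E (cyc (Suc i)) (cyc (i + 2 * s + 2))")
    case True
    then obtain s where s: "1 \<le> s" "s < arc_len i" and edge: "E (cyc (Suc i)) (cyc (i + 2 * s + 2))"
      by auto
    obtain r' where r': "r' \<in> xpos" "r' \<noteq> i" "r' \<noteq> r" using xpos_avoiding_two[OF assms(2), of i r] by blast
    define j where "j = i + 2 * s + 1"
    have j: "i + 3 \<le> j" "Suc j \<le> next_pos i" using next_pos_eq[OF i] s unfolding j_def by simp_all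
    have "\<not> E (cyc (Suc r')) (cyc (j - 1))"
      using free_crossing_in_arc[OF i r'(1,2) j] edge no_free unfolding j_def by auto
    moreover have "even (j - 1)" using xpos_even[OF i] unfolding j_def by auto
    ultimately have "(r', j - 1) \<in> misses_on_arc i" using mem_misses_on_arc[OF i r'(1)] j by simp
    moreover have "(r', j - 1) \<notin> ?W" using r' unfolding arc_witness_def Let_def by (auto split: if_splits)
    ultimately show thesis using that by blast
  next
    case False
    then have W_row: "fst w = i" if "w \<in> ?W" for w
      using that unfolding arc_witness_def Let_def by auto
    have "next_pos i = i + 2 * (arc_len i - 1) + 2" using next_pos_eq[OF i] assms(4) by simp
    then have "\<not> E (cyc (Suc i)) (cyc (next_pos i))" using False assms(4) by auto
    then obtain j u where "(j, u) \<in> misses_on_arc i" "j \<noteq> i"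
      using miss_off_row_on_arc[OF i assms(2) no_free assms(4)] by blast
    then show thesis using that W_row by force
  qed
  have "card (insert e ?W) \<le> card (misses_on_arc i)"
    using W_sub e(1) finite_misses unfolding misses_on_arc_def by (intro card_mono) auto
  then show ?thesis using card_W e(2) assms(4) by (simp add: card_insert_if)
qed

lemma miss_ge_of_short_arc:
  assumes i: "i \<in> xpos" and "arc_len i = 1"
  shows "k - d \<le> miss i"
proof -
  have "E x (cyc (i + 2))" using nbr_next_pos[OF i] next_pos_eq[OF i] assms(2) by simp
  then have "card (nbhd E (cyc (Suc i)) \<inter> set C) \<le> d"
    using short_arc_degree_bound[OF xpos_nbr[OF i]] by blast
  then show ?thesis using card_succ_nbhd_inter_C[OF xpos_even[OF i]] miss_le_k[of i] by simp
qed

lemma miss_root_ge_of_crossing: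
  assumes "p \<in> xpos" "q \<in> xpos" "0 < p" "p < q"
    and "E (cyc (Suc p)) (cyc 0)" "E (cyc (Suc q)) (cyc 2)"
  shows "k - d \<le> miss 0"
proof -
  have "crossing (L + 1)" unfolding crossing_def
  proof (intro exI conjI)
    show "p < L" "E x (cyc p)" "E x (cyc q)" using assms xpos_less_L xpos_nbr by auto
    show "p + 2 \<le> q" using xpos_add_2_le assms by blast
    show "q + 3 \<le> L + 1" using xpos_add_2_le_L[OF assms(2)] by simp
    show "L + 1 + 1 \<le> p + L" using xpos_add_2_le[OF zero_in_xpos assms(1,3)] by simp
    show "E (cyc (Suc p)) (cyc (L + 1 - 1))" using assms(5) cyc_L by simp
    show "E (cyc (Suc q)) (cyc (Suc (L + 1)))" using assms(6) cyc_L_add[of 2] by simp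
  qed
  then have "card (nbhd E (cyc (L + 1)) \<inter> set C) \<le> d" by (rule crossing_degree_bound)
  then have "card (nbhd E (cyc (Suc 0)) \<inter> set C) \<le> d" using cyc_L_add[of 1] by simp
  then show ?thesis using card_succ_nbhd_inter_C[of 0] miss_le_k[of 0] by simp
qed

lemma card_misses_ge_of_no_root_crossing:
  assumes "3 \<le> d" "d < k"
    and no_crossing: "\<And>p q. p \<in> xpos \<Longrightarrow> q \<in> xpos \<Longrightarrow> 0 < p \<Longrightarrow> p < q \<Longrightarrow>
      E (cyc (Suc p)) (cyc 0) \<Longrightarrow> \<not> E (cyc (Suc q)) (cyc 2)"
  shows "d - 2 \<le> card misses"
proof -
  have L: "4 \<le> L" using assms(1,2) k_def by simp
  let ?S = "xpos - {0}"
  let ?A = "{p \<in> ?S. E (cyc (Suc p)) (cyc 0)}"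
  let ?B = "{q \<in> ?S. E (cyc (Suc q)) (cyc 2)}"
  have fin: "finite ?S" using finite_xpos by simp
  have card_S: "card ?S = d - 1" using card_xpos zero_in_xpos finite_xpos by simp
  have "card ?A + card ?B \<le> card ?S + 1"
    using no_crossing by (intro card_add_card_le_of_separated[OF fin]) (auto, meson not_le)
  moreover have "card ?A \<le> card ?S" "card ?B \<le> card ?S" using fin by (auto intro: card_mono)
  let ?M1 = "(\<lambda>p. (p, L)) ` (?S - ?A)"
  let ?M2 = "(\<lambda>q. (q, 2::nat)) ` (?S - ?B)"
  have "card (?S - ?A) = card ?S - card ?A" "card (?S - ?B) = card ?S - card ?B"
    using fin by (intro card_Diff_subset; auto intro: finite_subset)+
  moreover have "card ?M1 = card (?S - ?A)" "card ?M2 = card (?S - ?B)"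
    by (auto intro: card_image simp: inj_on_def)
  moreover have "card (?M1 \<union> ?M2) = card ?M1 + card ?M2" using L fin by (intro card_Un_disjoint) auto
  moreover have "?M1 \<union> ?M2 \<subseteq> misses" unfolding misses_def Ypos_def using cyc_L L even_L by auto
  then have "card (?M1 \<union> ?M2) \<le> card misses" using finite_misses by (rule card_mono[rotated])
  ultimately show ?thesis using card_S by linarith
qed

lemma card_misses_ge_no_free:
  assumes "2 \<le> d" "\<nexists>t. free_crossing t"
  shows "k - d \<le> card misses"
proof -
  have "(\<Sum>i\<in>xpos. arc_len i - 1) \<le> (\<Sum>i\<in>xpos. card (misses_on_arc i))"
    using card_misses_on_arc_ge[OF _ assms] by (rule sum_mono)
  then show ?thesis using sum_arc_len_minus_1 card_misses_eq_sum_arcs by simp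
qed

definition short_arcs where "short_arcs = {i \<in> xpos. arc_len i = 1}"

lemma card_misses_ge_short_arcs: "card short_arcs * (k - d) \<le> card misses"
proof -
  have "card short_arcs * (k - d) = (\<Sum>i\<in>short_arcs. k - d)" by simp
  also have "\<dots> \<le> (\<Sum>i\<in>short_arcs. miss i)"
    using miss_ge_of_short_arc unfolding short_arcs_def by (intro sum_mono) auto
  also have "\<dots> \<le> (\<Sum>i\<in>xpos. miss i)" using finite_xpos unfolding short_arcs_def by (intro sum_mono2) auto
  finally show ?thesis using card_misses_eq_sum_miss by simp
qed

lemma d_minus_card_short_arcs_le: "d - card short_arcs \<le> k - d"
proof -
  have "short_arcs \<subseteq> xpos" unfolding short_arcs_def by auto
  then have "card (xpos - short_arcs) = d - card short_arcs"
    using finite_xpos card_xpos by (simp add: card_Diff_subset finite_subset)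
  moreover have "(\<Sum>i\<in>xpos - short_arcs. 1) \<le> (\<Sum>i\<in>xpos - short_arcs. arc_len i - 1)"
    using arc_len_ge_1 unfolding short_arcs_def by (intro sum_mono) fastforce
  moreover have "\<dots> \<le> (\<Sum>i\<in>xpos. arc_len i - 1)" using finite_xpos by (intro sum_mono2) auto
  ultimately show ?thesis using sum_arc_len_minus_1 by simp
qed

lemma card_misses_ge_no_free_short_arcs:
  assumes "3 \<le> d" "\<nexists>t. free_crossing t"
  shows "k - card short_arcs \<le> card misses"
proof -
  let ?f = "\<lambda>i. if arc_len i = 1 then 0 else arc_len i"
  have "(\<Sum>i\<in>xpos. ?f i) \<le> (\<Sum>i\<in>xpos. card (misses_on_arc i))"
  proof (rule sum_mono)
    fix i assume i: "i \<in> xpos"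
    show "?f i \<le> card (misses_on_arc i)"
      using card_misses_on_arc_ge_arc_len[OF i assms] arc_len_ge_1[OF i] by simp
  qed
  moreover have "(\<Sum>i\<in>xpos. ?f i) + card short_arcs = k"
  proof -
    have "(\<Sum>i\<in>xpos. ?f i) + (\<Sum>i\<in>xpos. if arc_len i = 1 then 1 else 0) = (\<Sum>i\<in>xpos. arc_len i)"
      unfolding sum.distrib[symmetric] by (intro sum.cong) auto
    moreover have "(\<Sum>i\<in>xpos. if arc_len i = 1 then 1 else 0) = card short_arcs"
      unfolding short_arcs_def using sum.inter_filter[OF finite_xpos, of "\<lambda>_. 1::nat" "\<lambda>i. arc_len i = 1"]
      by simp
    ultimately show ?thesis using sum_arc_len by simp
  qed
  ultimately show ?thesis using card_misses_eq_sum_arcs by simp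
qed

lemma card_misses_ge_of_two_short_arcs:
  assumes "d < k" "2 \<le> card short_arcs"
  shows "k - 2 \<le> card misses"
proof -
  have "d \<le> card short_arcs + (k - d)" "1 \<le> k - d" using d_minus_card_short_arcs_le assms(1) by auto
  then have "d + (k - d) \<le> card short_arcs * (k - d) + 2" by (rule add_le_mult_add_2[OF assms(2)])
  then show ?thesis using card_misses_ge_short_arcs assms(1) by linarith
qed

lemma card_misses_ge_d_minus_2:
  assumes "3 \<le> d" "d < k"
  shows "d - 2 \<le> card misses"
proof (cases "2 \<le> card short_arcs")
  case True
  then show ?thesis using card_misses_ge_of_two_short_arcs assms(2) by fastforce
next
  case False
  then have "d - 1 \<le> k - d" using d_minus_card_short_arcs_le by linarith
  show ?thesis
  proof (cases "\<exists>p q. p \<in> xpos \<and> q \<in> xpos \<and> 0 < p \<and> p < q \<and>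
      E (cyc (Suc p)) (cyc 0) \<and> E (cyc (Suc q)) (cyc 2)")
    case True
    then have "k - d \<le> miss 0" using miss_root_ge_of_crossing by blast
    then show ?thesis using miss_le_card_misses[OF zero_in_xpos] \<open>d - 1 \<le> k - d\<close> by linarith
  next
    case False
    then show ?thesis using card_misses_ge_of_no_root_crossing[OF assms] by blast
  qed
qed

lemma card_misses_ge_k_minus_2:
  assumes "3 \<le> d" "d < k" "\<nexists>t. free_crossing t"
  shows "k - 2 \<le> card misses"
  using card_misses_ge_of_two_short_arcs[OF assms(2)] card_misses_ge_no_free_short_arcs[OF assms(1,3)]
  by (cases "2 \<le> card short_arcs") auto

lemma off_cycle_nbhds_succ_disjoint:
  assumes i: "i \<in> xpos" and j: "j \<in> xpos" and "i < j"
  shows "(nbhd E (cyc (Suc i)) - set C) \<inter> (nbhd E (cyc (Suc j)) - set C) = {}"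
proof (rule equals0I)
  fix z assume z: "z \<in> (nbhd E (cyc (Suc i)) - set C) \<inter> (nbhd E (cyc (Suc j)) - set C)"
  have "z \<noteq> x" using z nbhd_subset_Y[OF succ_in_X[OF xpos_even[OF i]]] x_in_X disjoint_XY by blast
  then show False
    using no_common_off_cycle_nbr_succs[OF xpos_nbr[OF i] xpos_nbr[OF j] assms(3), of z]
      xpos_less_L[OF j] z edge_sym unfolding nbhd_def by auto
qed

lemma off_cycle_nbhds_x_succ_disjoint:
  assumes "i \<in> xpos"
  shows "(nbhd E x - set C) \<inter> (nbhd E (cyc (Suc i)) - set C) = {}"
  using no_common_off_cycle_nbr_x_succ[OF xpos_nbr[OF assms]] edge_sym unfolding nbhd_def by blast

lemma card_Y_ge_off_cycle_nbhds:
  assumes W: "W \<subseteq> Y - set C" "W \<inter> (nbhd E x - set C) = {}"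
    "\<And>i. i \<in> xpos \<Longrightarrow> W \<inter> (nbhd E (cyc (Suc i)) - set C) = {}"
  shows "k + card (nbhd E x - set C) + (\<Sum>i\<in>xpos. card (nbhd E (cyc (Suc i)) - set C)) + card W
    \<le> card Y"
proof -
  let ?N = "\<lambda>v. nbhd E v - set C"
  let ?S = "\<Union>i\<in>xpos. ?N (cyc (Suc i))"
  have fin: "finite (Y \<inter> set C)" "finite (?N x)" "finite ?S" "finite W" "\<And>v. finite (?N v)"
    using finite_Y finite_nbhd finite_xpos W(1) by (auto intro: finite_subset)
  have "card ?S = (\<Sum>i\<in>xpos. card (?N (cyc (Suc i))))"
  proof (rule card_UN_disjoint)
    show "\<forall>i\<in>xpos. \<forall>j\<in>xpos. i \<noteq> j \<longrightarrow> ?N (cyc (Suc i)) \<inter> ?N (cyc (Suc j)) = {}"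
      using off_cycle_nbhds_succ_disjoint by (metis Int_commute linorder_neqE_nat)
  qed (use finite_xpos fin(5) in auto)
  moreover have "?N x \<inter> ?S = {}" using off_cycle_nbhds_x_succ_disjoint by blast
  moreover have "(Y \<inter> set C) \<inter> ?N x = {}" "(Y \<inter> set C) \<inter> ?S = {}" by blast+
  moreover have "W \<inter> ((Y \<inter> set C) \<union> ?N x \<union> ?S) = {}" using W by blast
  ultimately have card_union: "card ((Y \<inter> set C) \<union> ?N x \<union> ?S \<union> W)
      = card (Y \<inter> set C) + card (?N x) + (\<Sum>i\<in>xpos. card (?N (cyc (Suc i)))) + card W"
    using fin by (simp add: card_Un_disjoint Int_Un_distrib2 Int_commute)
  have "(Y \<inter> set C) \<union> ?N x \<union> ?S \<union> W \<subseteq> Y"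
    using nbhd_subset_Y[OF x_in_X] nbhd_subset_Y[OF succ_in_X[OF xpos_even]] W(1) by blast
  then have "card ((Y \<inter> set C) \<union> ?N x \<union> ?S \<union> W) \<le> card Y" by (rule card_mono[OF finite_Y])
  then show ?thesis using card_union card_Y_inter_C by simp
qed

lemma card_off_cycle_nbhd: "card (nbhd E v - set C) = card (nbhd E v) - card (nbhd E v \<inter> set C)"
  using finite_nbhd by (simp add: card_Diff_subset_Int)

lemma card_Y_ge_min_degree:
  assumes min_deg: "\<And>v. v \<in> X \<Longrightarrow> \<delta> \<le> card (nbhd E v)" and "k < \<delta>"
  shows "k + (\<delta> - d) + d * (\<delta> - k) + card misses + (if \<exists>t. free_crossing t then \<delta> - d else 0)
    \<le> card Y"
proof -
  let ?N = "\<lambda>v. nbhd E v - set C"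
  have "\<delta> - k + miss i \<le> card (?N (cyc (Suc i)))" if i: "i \<in> xpos" for i
    using card_off_cycle_nbhd card_succ_nbhd_inter_C[OF xpos_even[OF i]] miss_le_k[of i] assms(2)
      min_deg[OF succ_in_X[OF xpos_even[OF i]]] by simp
  then have "(\<Sum>i\<in>xpos. \<delta> - k + miss i) \<le> (\<Sum>i\<in>xpos. card (?N (cyc (Suc i))))" by (rule sum_mono)
  then have succs: "d * (\<delta> - k) + card misses \<le> (\<Sum>i\<in>xpos. card (?N (cyc (Suc i))))"
    using card_xpos card_misses_eq_sum_miss by (simp add: sum.distrib)
  have x: "\<delta> - d \<le> card (?N x)"
    using card_off_cycle_nbhd[of x] min_deg[OF x_in_X] unfolding d_def by linarith
  show ?thesis
  proof (cases "\<exists>t. free_crossing t")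
    case True
    then obtain t where t: "free_crossing t" by blast
    then have cr: "crossing t" unfolding free_crossing_def by blast
    have "k + card (?N x) + (\<Sum>i\<in>xpos. card (?N (cyc (Suc i)))) + card (?N (cyc t)) \<le> card Y"
    proof (rule card_Y_ge_off_cycle_nbhds)
      show "?N (cyc t) \<subseteq> Y - set C" using nbhd_subset_Y[OF crossing_in_X[OF cr]] by blast
      show "?N (cyc t) \<inter> ?N x = {}"
        using crossing_off_cycle_nbr_not_x_nbr[OF cr] unfolding nbhd_def by blast
      show "?N (cyc t) \<inter> ?N (cyc (Suc i)) = {}" if "i \<in> xpos" for i
        using free_crossing_off_cycle_nbr_not_succ_nbr[OF t xpos_nbr[OF that] xpos_less_L[OF that]]
        unfolding nbhd_def by blast
    qed
    moreover have "\<delta> - d \<le> card (?N (cyc t))"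
      using card_off_cycle_nbhd[of "cyc t"] min_deg[OF crossing_in_X[OF cr]] crossing_degree_bound[OF cr]
      by linarith
    ultimately show ?thesis using succs x True by simp
  next
    case False
    have "k + card (?N x) + (\<Sum>i\<in>xpos. card (?N (cyc (Suc i)))) \<le> card Y"
      using card_Y_ge_off_cycle_nbhds[of "{}"] by simp
    then show ?thesis using succs x False by simp
  qed
qed

theorem card_Y_ge_three_delta_minus_4:
  assumes min_deg: "\<And>v. v \<in> X \<Longrightarrow> \<delta> \<le> card (nbhd E v)" and "2 \<le> d" "d < k" "k < \<delta>"
  shows "3 * int \<delta> - 4 \<le> int (card Y)"
proof -
  let ?free = "\<exists>t. free_crossing t"
  define B where "B = (if ?free then \<delta> - d else 0)"
  have "int (k + (\<delta> - d) + d * (\<delta> - k) + card misses + B) \<le> int (card Y)"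
    using card_Y_ge_min_degree[OF min_deg assms(4)] unfolding B_def by (simp only: of_nat_le_iff)
  then have Y: "int k + (int \<delta> - int d) + int d * (int \<delta> - int k) + int (card misses) + int B
      \<le> int (card Y)"
    using assms(3,4) by (simp add: of_nat_diff)
  have B: "int B = (if ?free then int \<delta> - int d else 0)" using assms(3,4) unfolding B_def by simp
  consider (rigid) "\<delta> = k + 1" "3 \<le> d" | (slack) "k + 2 \<le> \<delta> \<or> d = 2"
    using assms(2,4) by linarith
  then show ?thesis
  proof cases
    case rigid
    have "d - 2 \<le> card misses" "\<not> ?free \<Longrightarrow> k - 2 \<le> card misses"
      using card_misses_ge_d_minus_2 card_misses_ge_k_minus_2 rigid(2) assms(3) by auto
    then show ?thesis using Y B rigid assms(3) by (cases ?free) auto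
  next
    case slack
    have nonneg: "0 \<le> (int d - 2) * (int \<delta> - int k - 2)" "0 \<le> (int d - 1) * (int \<delta> - int k - 2) + 2"
      using slack assms(2,4) by auto
    have expand: "(int d - 2) * (int \<delta> - int k - 2)
        = int d * (int \<delta> - int k) - 2 * int d - 2 * int \<delta> + 2 * int k + 4"
      "(int d - 1) * (int \<delta> - int k - 2) = int d * (int \<delta> - int k) - 2 * int d - int \<delta> + int k + 2"
      by (simp_all add: algebra_simps)
    show ?thesis
    proof (cases ?free)
      case True
      then have "int B = int \<delta> - int d" using B by simp
      then show ?thesis using Y nonneg(2) expand(2) by linarith
    next
      case False
      then have "int B = 0" "int k - int d \<le> int (card misses)"
        using B card_misses_ge_no_free assms(2,3) by fastforce+
      then show ?thesis using Y nonneg(1) expand(1) by linarith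
    qed
  qed
qed

end

theorem lemma2:
  fixes X Y :: "'a set" and E :: "'a \<Rightarrow> 'a \<Rightarrow> bool" and C :: "'a list" and x :: 'a
    and n m \<delta> :: nat
  assumes "bipartite_graph X Y E"
    and "card X = n" and "n \<ge> 2" and "card Y = m"
    and "\<forall>v \<in> X. card (nbhd E v) \<ge> \<delta>"
    and "tight_pair X Y E C x"
    and "2 \<le> card (nbhd E x \<inter> set C)"
    and "card (nbhd E x \<inter> set C) < card (Y \<inter> set C)"
    and "n \<le> \<delta>"
  shows "int m \<ge> 3 * int \<delta> - 4"
proof -
  obtain y where y: "y \<in> nbhd E x" "y \<in> set C"
    using assms(7) by (metis card.empty disjoint_iff not_numeral_le_zero)
  obtain C' where C': "tight_pair X Y E C' x" "set C' = set C" "C' ! 0 = y"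
    using tight_pair_rotate[OF assms(6) y(2)] .
  interpret rooted_tight_pair X Y E C' x
    using assms(1) C' y(1) by unfold_locales (auto simp: nbhd_def)
  have "d = card (nbhd E x \<inter> set C)" "k = card (Y \<inter> set C)"
    using C'(2) card_Y_inter_C unfolding d_def by simp_all
  then show ?thesis using card_Y_ge_three_delta_minus_4[of \<delta>] k_less_card_X assms by simp
qed

end
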